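(* Let $\phi$ be a $\gamma$-leaky, $H$-smooth activation and $C_R=10R^2\gamma^{-2}+10$. (a) Under (A1) and (A2), with probability at least $1-\delta$, $\max_{i,j}\frac{e^{-y_if(x_i;W^{(0)})}}{e^{-y_jf(x_j;W^{(0)})}}\le e^2$. (b) If at time $t$ there is a constant $C_R'>1$ with $\max_{i,j}g_i^{(t)}/g_j^{(t)}\le C_R'$, if $\|x_k\|^2\ge2\gamma^{-2}C_R'n\max_{i\ne k}|\langle x_i,x_k\rangle|$ for all $k$, and if $\alpha\le\gamma^2/(2HC_R'R^2R_{\max}^2n)$, then for all $k\in[n]$, $y_k[f(x_k;W^{(t+1)})-f(x_k;W^{(t)})]\ge\frac{\alpha\gamma^2R_{\min}^2}{4C_R'n}\hat G(W^{(t)})$. (c) If $\|x_k\|^2\ge8\gamma^{-2}n\max_{i\ne k}|\langle x_i,x_k\rangle|$ for all $k$, then under (A1) and (A2), with probability at least $1-\delta$, $y_kf(x_k;W^{(1)})>0$ for all $k\in[n]$.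
   Context: Network $f(x;W)=\sum_{j=1}^ma_j\phi(\langle w_j,x\rangle)$, $a_j\in\{\pm1/\sqrt m\}$. $\phi$ is $\gamma$-leaky, $H$-smooth if $\phi(0)=0$, $\phi$ twice differentiable, $\gamma\le\phi'\le1$, $|\phi''|\le H$. Logistic loss $\ell(z)=\log(1+e^{-z})$, $\hat L(W)=\frac1n\sum_i\ell(y_if(x_i;W))$; gradient descent from $W^{(0)}$ with i.i.d. $\mathsf N(0,\omega_{\mathrm{init}}^2)$ entries, $W^{(t+1)}=W^{(t)}-\alpha\nabla\hat L(W^{(t)})$. $g(z)=1/(1+e^z)$, $g_i^{(t)}=g(y_if(x_i;W^{(t)}))$, $\hat G(W)=\frac1n\sum_ig(y_if(x_i;W))$. $R_{\max}=\max_i\|x_i\|$, $R_{\min}=\min_i\|x_i\|$, $R=R_{\max}/R_{\min}$. (A1): $\alpha\le\gamma^2(5nR_{\max}^2R^2C_R\max(1,H))^{-1}$; (A2): $\omega_{\mathrm{init}}\le\alpha\gamma^2R_{\min}(72RC_Rn\sqrt{md\log(4m/\delta)})^{-1}$, for a given $\delta\in(0,1)$. *)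

theory Defs
  imports "HOL-Probability.Probability"
begin

text \<open>Data: n samples x i (i < n), each a vector in R^d given as x i k (k < d);
labels y i in {-1,1}. Network weights W (j,k) for neuron j < m, coordinate k < d;
second layer a j in {1/sqrt m, -1/sqrt m}.\<close>

definition ip :: "nat \<Rightarrow> (nat \<Rightarrow> real) \<Rightarrow> (nat \<Rightarrow> real) \<Rightarrow> real" where
  "ip d u v = (\<Sum>k<d. u k * v k)"

definition vnorm :: "nat \<Rightarrow> (nat \<Rightarrow> real) \<Rightarrow> real" where
  "vnorm d u = sqrt (ip d u u)"

definition leaky_smooth :: "(real \<Rightarrow> real) \<Rightarrow> real \<Rightarrow> real \<Rightarrow> bool" where
  "leaky_smooth \<phi> \<gamma> H \<longleftrightarrow> \<phi> 0 = 0
     \<and> (\<forall>z. \<phi> differentiable (at z)) \<and> (\<forall>z. deriv \<phi> differentiable (at z))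
     \<and> (\<forall>z. \<gamma> \<le> deriv \<phi> z \<and> deriv \<phi> z \<le> 1)
     \<and> (\<forall>z. \<bar>deriv (deriv \<phi>) z\<bar> \<le> H)"

definition net :: "(real \<Rightarrow> real) \<Rightarrow> (nat \<Rightarrow> real) \<Rightarrow> nat \<Rightarrow> nat
    \<Rightarrow> (nat \<times> nat \<Rightarrow> real) \<Rightarrow> (nat \<Rightarrow> real) \<Rightarrow> real" where
  "net \<phi> a m d W z = (\<Sum>j<m. a j * \<phi> (\<Sum>k<d. W (j,k) * z k))"

definition logistic :: "real \<Rightarrow> real" where
  "logistic z = ln (1 + exp (- z))"

definition gfun :: "real \<Rightarrow> real" where
  "gfun z = 1 / (1 + exp z)"

definition emp_loss :: "(real \<Rightarrow> real) \<Rightarrow> (nat \<Rightarrow> real) \<Rightarrow> nat \<Rightarrow> nat \<Rightarrow> nat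
    \<Rightarrow> (nat \<Rightarrow> nat \<Rightarrow> real) \<Rightarrow> (nat \<Rightarrow> real) \<Rightarrow> (nat \<times> nat \<Rightarrow> real) \<Rightarrow> real" where
  "emp_loss \<phi> a m d n x y W = (1 / real n) * (\<Sum>i<n. logistic (y i * net \<phi> a m d W (x i)))"

definition emp_G :: "(real \<Rightarrow> real) \<Rightarrow> (nat \<Rightarrow> real) \<Rightarrow> nat \<Rightarrow> nat \<Rightarrow> nat
    \<Rightarrow> (nat \<Rightarrow> nat \<Rightarrow> real) \<Rightarrow> (nat \<Rightarrow> real) \<Rightarrow> (nat \<times> nat \<Rightarrow> real) \<Rightarrow> real" where
  "emp_G \<phi> a m d n x y W = (1 / real n) * (\<Sum>i<n. gfun (y i * net \<phi> a m d W (x i)))"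

definition grad :: "((nat \<times> nat \<Rightarrow> real) \<Rightarrow> real) \<Rightarrow> (nat \<times> nat \<Rightarrow> real) \<Rightarrow> (nat \<times> nat \<Rightarrow> real)" where
  "grad L W = (\<lambda>p. deriv (\<lambda>t. L (W(p := t))) (W p))"

primrec gd :: "((nat \<times> nat \<Rightarrow> real) \<Rightarrow> real) \<Rightarrow> real \<Rightarrow> (nat \<times> nat \<Rightarrow> real) \<Rightarrow> nat
    \<Rightarrow> (nat \<times> nat \<Rightarrow> real)" where
  "gd L \<alpha> W0 0 = W0"
| "gd L \<alpha> W0 (Suc t) = (\<lambda>p. gd L \<alpha> W0 t p - \<alpha> * grad L (gd L \<alpha> W0 t) p)"

definition init_measure :: "nat \<Rightarrow> nat \<Rightarrow> real \<Rightarrow> (nat \<times> nat \<Rightarrow> real) measure" where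
  "init_measure m d \<omega> = PiM ({..<m} \<times> {..<d}) (\<lambda>_. density lborel (normal_density 0 \<omega>))"

definition Rmax :: "nat \<Rightarrow> nat \<Rightarrow> (nat \<Rightarrow> nat \<Rightarrow> real) \<Rightarrow> real" where
  "Rmax n d x = Max ((\<lambda>i. vnorm d (x i)) ` {..<n})"

definition Rmin :: "nat \<Rightarrow> nat \<Rightarrow> (nat \<Rightarrow> nat \<Rightarrow> real) \<Rightarrow> real" where
  "Rmin n d x = Min ((\<lambda>i. vnorm d (x i)) ` {..<n})"

end

theory Submission
  imports Defs
begin

text \<open>
  Part (b) is a second-order Taylor expansion of one gradient step. The step shifts the
  preactivation of neuron j at x_k by
  \<delta>_j = (\<alpha>/n) a_j \<Sum>_i g_i y_i \<phi>'(<w_j, x_i>) <x_i, x_k>.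
  In the first-order term \<Sum>_j y_k a_j \<phi>'(<w_j, x_k>) \<delta>_j the diagonal summand i = k contributes
  at least \<alpha> \<gamma>^2 g_k |x_k|^2 / n; because g_i \<le> C' g_k and the data are nearly orthogonal, the
  off-diagonal summands remove at most half of that. The second-order remainder is at most
  H \<alpha>^2 G^2 R_max^2 |x_k|^2 / 2, which the step-size condition absorbs into the other half.

  Parts (a) and (c) rest on |f(x; W)| \<le> |x| |W|_F and a Chernoff bound for the squared Frobenius
  norm of the Gaussian initialization: under (A2), with probability 1 - \<delta> all initial outputs are
  smaller than B = \<alpha> \<gamma>^2 R_min^2 / (64 n), and B \<le> 1 by (A1). Hence all losses agree up to a
  factor e^2, and all g_i \<ge> 1/4, so (b) applies with C' = 4 and gives a margin gain of at
  least B, which beats the initial |y_k f(x_k)| < B.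
\<close>

section \<open>Leaky smooth activations\<close>

lemma leaky_smoothD:
  assumes "leaky_smooth \<phi> \<gamma> H"
  shows "\<phi> 0 = 0" "\<And>z. (\<phi> has_real_derivative deriv \<phi> z) (at z)"
    "\<And>z. (deriv \<phi> has_real_derivative deriv (deriv \<phi>) z) (at z)"
    "\<And>z. \<gamma> \<le> deriv \<phi> z" "\<And>z. deriv \<phi> z \<le> 1" "\<And>z. \<bar>deriv (deriv \<phi>) z\<bar> \<le> H"
    "0 \<le> H" "\<gamma> \<le> 1"
  using assms unfolding leaky_smooth_def
  by (auto simp: DERIV_deriv_iff_real_differentiable intro: order.trans[OF abs_ge_zero] order.trans)

lemma leaky_smooth_taylor:
  assumes "leaky_smooth \<phi> \<gamma> H"
  shows "\<bar>\<phi> (u + e) - \<phi> u - deriv \<phi> u * e\<bar> \<le> H * e\<^sup>2 / 2"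
proof (cases "e = 0")
  case False
  note \<phi> = leaky_smoothD[OF assms]
  define diff :: "nat \<Rightarrow> real \<Rightarrow> real" where
    "diff = (\<lambda>k. if k = 0 then \<phi> else if k = 1 then deriv \<phi> else deriv (deriv \<phi>))"
  have "\<exists>t. (if u + e < u then u + e < t \<and> t < u else u < t \<and> t < u + e) \<and>
    \<phi> (u + e) = (\<Sum>k<2. diff k u / fact k * (u + e - u) ^ k) + diff 2 t / fact 2 * (u + e - u)\<^sup>2"
    by (rule Taylor[where a = "u - \<bar>e\<bar>" and b = "u + \<bar>e\<bar>"])
      (use False \<phi>(2,3) in \<open>auto simp: diff_def less_Suc_eq\<close>)
  then obtain t where t: "\<phi> (u + e) = \<phi> u + deriv \<phi> u * e + deriv (deriv \<phi>) t / 2 * e\<^sup>2"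
    by (auto simp: diff_def eval_nat_numeral)
  have "\<bar>deriv (deriv \<phi>) t / 2 * e\<^sup>2\<bar> \<le> H * e\<^sup>2 / 2"
    using \<phi>(6)[of t] by (simp add: abs_mult mult_right_mono)
  then show ?thesis using t by simp
qed simp

lemma leaky_smooth_abs_le:
  assumes "leaky_smooth \<phi> \<gamma> H" "0 \<le> \<gamma>"
  shows "\<bar>\<phi> z\<bar> \<le> \<bar>z\<bar>"
proof -
  note \<phi> = leaky_smoothD[OF assms(1)]
  have "\<bar>deriv \<phi> t\<bar> \<le> 1" for t using \<phi>(4,5)[of t] assms(2) by auto
  then have "norm (\<phi> z - \<phi> 0) \<le> 1 * norm (z - 0)"
    using \<phi>(2) by (intro field_differentiable_bound[of UNIV]) (auto intro: has_field_derivative_at_within)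
  then show ?thesis using \<phi>(1) by simp
qed

lemma leaky_smooth_borel_measurable:
  assumes "leaky_smooth \<phi> \<gamma> H"
  shows "\<phi> \<in> borel_measurable borel" "deriv \<phi> \<in> borel_measurable borel"
  using leaky_smoothD(2,3)[OF assms]
  by (auto intro!: borel_measurable_continuous_onI continuous_at_imp_continuous_on DERIV_isCont)

section \<open>The gradient of the empirical loss\<close>

definition preact :: "nat \<Rightarrow> (nat \<times> nat \<Rightarrow> real) \<Rightarrow> (nat \<Rightarrow> real) \<Rightarrow> nat \<Rightarrow> real" where
  "preact d W z j = (\<Sum>k<d. W (j, k) * z k)"

lemma net_eq_sum_preact: "net \<phi> a m d W z = (\<Sum>j<m. a j * \<phi> (preact d W z j))"
  by (simp add: net_def preact_def)

lemma preact_fun_upd: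
  "preact d (W(p := t)) z j = preact d W z j + (if j = fst p \<and> snd p < d then (t - W p) * z (snd p) else 0)"
proof -
  have "preact d (W(p := t)) z j
      = (\<Sum>k<d. W (j, k) * z k + (if k = snd p \<and> j = fst p then (t - W p) * z (snd p) else 0))"
    unfolding preact_def by (intro sum.cong) (auto simp: algebra_simps)
  then show ?thesis
    by (cases "j = fst p") (auto simp: sum.distrib sum.delta preact_def)
qed

lemma net_fun_upd_has_real_derivative:
  assumes "\<And>z. (\<phi> has_real_derivative deriv \<phi> z) (at z)"
  shows "((\<lambda>t. net \<phi> a m d (W(p := t)) z) has_real_derivative
     (\<Sum>j<m. a j * (deriv \<phi> (preact d W z j) * (if j = fst p \<and> snd p < d then z (snd p) else 0))))
     (at (W p))"
proof -
  define e where "e j = (if j = fst p \<and> snd p < d then z (snd p) else 0)" for j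
  have "((\<lambda>t. preact d W z j + (t - W p) * e j) has_real_derivative e j) (at (W p))" for j
    by (auto intro!: derivative_eq_intros)
  from DERIV_chain2[OF assms this]
  have "((\<lambda>t. \<phi> (preact d W z j + (t - W p) * e j)) has_real_derivative
      deriv \<phi> (preact d W z j) * e j) (at (W p))" for j
    by simp
  moreover have "net \<phi> a m d (W(p := t)) z = (\<Sum>j<m. a j * \<phi> (preact d W z j + (t - W p) * e j))" for t
    by (auto simp: net_eq_sum_preact preact_fun_upd e_def intro!: sum.cong)
  ultimately show ?thesis
    unfolding e_def[symmetric] by (auto intro!: DERIV_sum DERIV_cmult)
qed

lemma logistic_has_real_derivative: "(logistic has_real_derivative - gfun z) (at z)"
proof -
  have "(logistic has_real_derivative 1 / (1 + exp (- z)) * (exp (- z) * - 1)) (at z)"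
    unfolding logistic_def[abs_def] by (auto intro!: derivative_eq_intros simp: add_pos_pos)
  moreover have "1 / (1 + exp (- z)) * (exp (- z) * - 1) = - gfun z"
    unfolding gfun_def by (simp add: field_simps exp_minus)
  ultimately show ?thesis by simp
qed

definition loss_grad :: "(real \<Rightarrow> real) \<Rightarrow> (nat \<Rightarrow> real) \<Rightarrow> nat \<Rightarrow> nat \<Rightarrow> nat
    \<Rightarrow> (nat \<Rightarrow> nat \<Rightarrow> real) \<Rightarrow> (nat \<Rightarrow> real) \<Rightarrow> (nat \<times> nat \<Rightarrow> real) \<Rightarrow> nat \<times> nat \<Rightarrow> real" where
  "loss_grad \<phi> a m d n x y W = (\<lambda>(j, k). if j < m \<and> k < d then
     - (1 / real n) * (\<Sum>i<n. gfun (y i * net \<phi> a m d W (x i)) * y i * a j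
                                 * deriv \<phi> (preact d W (x i) j) * x i k) else 0)"

lemma grad_emp_loss:
  assumes "\<And>z. (\<phi> has_real_derivative deriv \<phi> z) (at z)"
  shows "grad (emp_loss \<phi> a m d n x y) W = loss_grad \<phi> a m d n x y W"
proof
  fix p :: "nat \<times> nat"
  obtain j0 k0 where p: "p = (j0, k0)" by force
  define D where "D i = (\<Sum>j<m. a j * (deriv \<phi> (preact d W (x i) j)
                       * (if j = fst p \<and> snd p < d then x i (snd p) else 0)))" for i
  have "((\<lambda>t. emp_loss \<phi> a m d n x y (W(p := t))) has_real_derivative
     1 / real n * (\<Sum>i<n. - gfun (y i * net \<phi> a m d (W(p := W p)) (x i)) * (y i * D i))) (at (W p))"
    unfolding emp_loss_def D_def
    by (intro DERIV_cmult DERIV_sum DERIV_chain2[OF logistic_has_real_derivative]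
        net_fun_upd_has_real_derivative assms)
  then have "grad (emp_loss \<phi> a m d n x y) W p
      = 1 / real n * (\<Sum>i<n. - gfun (y i * net \<phi> a m d W (x i)) * (y i * D i))"
    unfolding grad_def by (simp add: DERIV_imp_deriv)
  also have "\<dots> = loss_grad \<phi> a m d n x y W p"
  proof (cases "j0 < m \<and> k0 < d")
    case True
    then have "D i = a j0 * deriv \<phi> (preact d W (x i) j0) * x i k0" for i
      unfolding D_def p by (simp add: if_distrib sum.delta cong: if_cong)
    with True show ?thesis
      unfolding loss_grad_def p by (simp add: sum_negf sum_distrib_left algebra_simps)
  next
    case False
    then have "D i = 0" for i
      unfolding D_def p by (auto intro!: sum.neutral)
    with False show ?thesis unfolding loss_grad_def p by auto
  qed
  finally show "grad (emp_loss \<phi> a m d n x y) W p = loss_grad \<phi> a m d n x y W p" .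
qed

lemma gd_Suc_emp_loss:
  assumes "\<And>z. (\<phi> has_real_derivative deriv \<phi> z) (at z)"
  shows "gd (emp_loss \<phi> a m d n x y) \<alpha> W0 (Suc t)
    = (\<lambda>p. gd (emp_loss \<phi> a m d n x y) \<alpha> W0 t p
            - \<alpha> * loss_grad \<phi> a m d n x y (gd (emp_loss \<phi> a m d n x y) \<alpha> W0 t) p)"
  by (simp add: grad_emp_loss[OF assms])

lemma preact_loss_grad_step:
  assumes "j < m"
  shows "preact d (\<lambda>p. W p - \<alpha> * loss_grad \<phi> a m d n x y W p) z j
    = preact d W z j + \<alpha> / real n * a j * (\<Sum>i<n. gfun (y i * net \<phi> a m d W (x i)) * y i
        * deriv \<phi> (preact d W (x i) j) * ip d (x i) z)"
proof -
  define c where "c i = gfun (y i * net \<phi> a m d W (x i)) * y i * a j * deriv \<phi> (preact d W (x i) j)" for i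
  have "preact d (\<lambda>p. W p - \<alpha> * loss_grad \<phi> a m d n x y W p) z j
      = (\<Sum>k<d. W (j, k) * z k + \<alpha> / real n * (\<Sum>i<n. c i * x i k * z k))"
    unfolding preact_def using assms
    by (intro sum.cong refl)
      (simp add: loss_grad_def c_def sum_negf sum_distrib_left sum_distrib_right algebra_simps)
  also have "\<dots> = preact d W z j + \<alpha> / real n * (\<Sum>i<n. c i * ip d (x i) z)"
    by (simp add: preact_def ip_def sum.distrib sum_distrib_left mult.assoc sum.swap[of _ "{..<d}"])
  finally show ?thesis
    by (simp add: c_def sum_distrib_left algebra_simps)
qed

lemma ip_self_eq_vnorm_sq: "ip d u u = (vnorm d u)\<^sup>2"
  and vnorm_nonneg: "0 \<le> vnorm d u"
  unfolding vnorm_def ip_def by (auto simp: sum_nonneg power2_eq_square[symmetric])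

lemma abs_ip_le_vnorm_mult: "\<bar>ip d u v\<bar> \<le> vnorm d u * vnorm d v"
proof -
  have "(ip d u v)\<^sup>2 \<le> ip d u u * ip d v v"
    unfolding ip_def using Cauchy_Schwarz_ineq_sum[of u v "{..<d}"] by (simp add: power2_eq_square)
  then have "sqrt ((ip d u v)\<^sup>2) \<le> sqrt (ip d u u * ip d v v)"
    by (rule real_sqrt_le_mono)
  then show ?thesis unfolding vnorm_def by (simp add: real_sqrt_mult)
qed

lemma gfun_pos: "0 < gfun z"
  and gfun_less_one: "gfun z < 1"
  unfolding gfun_def by (auto simp: add_pos_pos)

lemma gfun_ge_quarter:
  assumes "z \<le> 1"
  shows "1 / 4 \<le> gfun z"
proof -
  have "exp z \<le> exp 1" using assms by simp
  also have "exp 1 \<le> (3::real)" using exp_le by simp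
  finally have "1 + exp z \<le> 4" by simp
  then show ?thesis unfolding gfun_def by (simp add: divide_le_eq add_pos_pos)
qed

definition frob_sq :: "nat \<Rightarrow> nat \<Rightarrow> (nat \<times> nat \<Rightarrow> real) \<Rightarrow> real" where
  "frob_sq m d W = (\<Sum>p\<in>{..<m} \<times> {..<d}. (W p)\<^sup>2)"

lemma frob_sq_nonneg: "0 \<le> frob_sq m d W"
  unfolding frob_sq_def by (intro sum_nonneg) auto

lemma net_sq_le_vnorm_frob_sq:
  assumes "leaky_smooth \<phi> \<gamma> H" "0 \<le> \<gamma>" and a: "\<forall>j<m. \<bar>a j\<bar> \<le> 1 / sqrt (real m)"
  shows "(net \<phi> a m d W z)\<^sup>2 \<le> (vnorm d z)\<^sup>2 * frob_sq m d W"
proof (cases "m = 0")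
  case False
  have "\<bar>net \<phi> a m d W z\<bar> \<le> (\<Sum>j<m. \<bar>a j * \<phi> (preact d W z j)\<bar>)"
    unfolding net_eq_sum_preact by (rule sum_abs)
  also have "\<dots> \<le> (\<Sum>j<m. 1 / sqrt (real m) * \<bar>preact d W z j\<bar>)"
    unfolding abs_mult using a leaky_smooth_abs_le[OF assms(1,2)]
    by (intro sum_mono mult_mono) auto
  finally have "\<bar>net \<phi> a m d W z\<bar> \<le> 1 / sqrt (real m) * (\<Sum>j<m. 1 * \<bar>preact d W z j\<bar>)"
    by (simp add: sum_distrib_left)
  then have "(net \<phi> a m d W z)\<^sup>2 \<le> (1 / sqrt (real m) * (\<Sum>j<m. 1 * \<bar>preact d W z j\<bar>))\<^sup>2"
    by (metis abs_ge_zero power2_abs power_mono)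
  also have "\<dots> = 1 / real m * (\<Sum>j<m. 1 * \<bar>preact d W z j\<bar>)\<^sup>2"
    by (simp add: power_mult_distrib power_divide)
  also have "\<dots> \<le> 1 / real m * ((\<Sum>j<m. 1\<^sup>2) * (\<Sum>j<m. \<bar>preact d W z j\<bar>\<^sup>2))"
    by (intro mult_left_mono Cauchy_Schwarz_ineq_sum) auto
  also have "\<dots> = (\<Sum>j<m. (preact d W z j)\<^sup>2)"
    using False by simp
  also have "\<dots> \<le> (\<Sum>j<m. (\<Sum>k<d. (W (j, k))\<^sup>2) * (\<Sum>k<d. (z k)\<^sup>2))"
    unfolding preact_def by (intro sum_mono Cauchy_Schwarz_ineq_sum)
  also have "\<dots> = (\<Sum>k<d. (z k)\<^sup>2) * (\<Sum>j<m. \<Sum>k<d. (W (j, k))\<^sup>2)"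
    by (simp add: sum_distrib_left mult.commute)
  also have "\<dots> = (vnorm d z)\<^sup>2 * frob_sq m d W"
    unfolding frob_sq_def ip_self_eq_vnorm_sq[symmetric] ip_def
    by (simp add: sum.cartesian_product power2_eq_square)
  finally show ?thesis .
qed (simp add: net_def frob_sq_nonneg)

lemma sum_ge_dominant_term:
  fixes t :: "nat \<Rightarrow> real"
  assumes "k < n" "0 \<le> e" "\<And>i. i < n \<Longrightarrow> i \<noteq> k \<Longrightarrow> - e \<le> t i"
  shows "t k - real n * e \<le> (\<Sum>i<n. t i)"
proof -
  have "- (real n * e) \<le> - (real (n - 1) * e)"
    using assms(2) by (intro le_imp_neg_le mult_right_mono) auto
  also have "\<dots> = (\<Sum>i\<in>{..<n} - {k}. - e)"
    using assms(1) by simp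
  also have "\<dots> \<le> (\<Sum>i\<in>{..<n} - {k}. t i)"
    using assms(3) by (intro sum_mono) auto
  finally show ?thesis
    using assms(1) by (simp add: sum.remove)
qed

lemma sum_increment_ge_linearization:
  assumes "leaky_smooth \<phi> \<gamma> H" "\<bar>c\<bar> \<le> 1" "\<forall>j<m. \<bar>a j\<bar> \<le> 1"
  shows "(\<Sum>j<m. c * a j * deriv \<phi> (s j) * e j) - H / 2 * (\<Sum>j<m. (e j)\<^sup>2)
    \<le> c * (\<Sum>j<m. a j * (\<phi> (s j + e j) - \<phi> (s j)))"
proof -
  have "c * a j * deriv \<phi> (s j) * e j - H / 2 * (e j)\<^sup>2 \<le> c * (a j * (\<phi> (s j + e j) - \<phi> (s j)))"
    if "j < m" for j
  proof -
    define r where "r = \<phi> (s j + e j) - \<phi> (s j) - deriv \<phi> (s j) * e j"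
    have "\<bar>c * a j\<bar> \<le> 1"
      using assms(2,3) that by (simp add: abs_mult mult_le_one)
    moreover have "\<bar>r\<bar> \<le> H / 2 * (e j)\<^sup>2"
      unfolding r_def using leaky_smooth_taylor[OF assms(1)] by simp
    ultimately have "\<bar>c * a j * r\<bar> \<le> 1 * (H / 2 * (e j)\<^sup>2)"
      unfolding abs_mult[of "c * a j"] by (intro mult_mono) auto
    moreover have "c * (a j * (\<phi> (s j + e j) - \<phi> (s j))) = c * a j * deriv \<phi> (s j) * e j + c * a j * r"
      unfolding r_def by (simp add: algebra_simps)
    ultimately show ?thesis by (simp add: abs_le_iff)
  qed
  then have "(\<Sum>j<m. c * a j * deriv \<phi> (s j) * e j - H / 2 * (e j)\<^sup>2)
      \<le> (\<Sum>j<m. c * (a j * (\<phi> (s j + e j) - \<phi> (s j))))"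
    by (intro sum_mono) auto
  then show ?thesis
    by (simp add: sum_distrib_left sum_subtractf)
qed

section \<open>Gaussian initialization\<close>

lemma nn_integral_normal_exp_sq:
  assumes "0 < \<omega>"
  shows "(\<integral>\<^sup>+z. ennreal (exp (z\<^sup>2 / (4 * \<omega>\<^sup>2))) \<partial>density lborel (normal_density 0 \<omega>)) = ennreal (sqrt 2)"
proof -
  have density_eq: "normal_density 0 \<omega> z * exp (z\<^sup>2 / (4 * \<omega>\<^sup>2)) = sqrt 2 * normal_density 0 (sqrt 2 * \<omega>) z" for z
  proof -
    have "exp (- (z - 0)\<^sup>2 / (2 * \<omega>\<^sup>2)) * exp (z\<^sup>2 / (4 * \<omega>\<^sup>2)) = exp (- (z - 0)\<^sup>2 / (2 * (sqrt 2 * \<omega>)\<^sup>2))"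
      unfolding exp_add[symmetric] using assms by (simp add: field_simps power_mult_distrib)
    moreover have "sqrt (2 * pi * (sqrt 2 * \<omega>)\<^sup>2) = sqrt 2 * sqrt (2 * pi * \<omega>\<^sup>2)"
      by (simp add: power_mult_distrib real_sqrt_mult[symmetric] mult_ac)
    ultimately show ?thesis
      unfolding normal_density_def by (simp add: mult.assoc)
  qed
  have "prob_space (density lborel (normal_density 0 (sqrt 2 * \<omega>)))"
    using assms by (intro prob_space_normal_density) auto
  then have total: "(\<integral>\<^sup>+z. ennreal (normal_density 0 (sqrt 2 * \<omega>) z) \<partial>lborel) = 1"
    using prob_space.emeasure_space_1 by (fastforce simp: emeasure_density)
  have "(\<integral>\<^sup>+z. ennreal (exp (z\<^sup>2 / (4 * \<omega>\<^sup>2))) \<partial>density lborel (normal_density 0 \<omega>))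
     = (\<integral>\<^sup>+z. ennreal (sqrt 2) * ennreal (normal_density 0 (sqrt 2 * \<omega>) z) \<partial>lborel)"
    by (subst nn_integral_density)
      (auto intro!: nn_integral_cong simp: density_eq ennreal_mult'[symmetric] ennreal_mult[symmetric])
  also have "\<dots> = ennreal (sqrt 2)"
    by (subst nn_integral_cmult) (auto simp: total)
  finally show ?thesis .
qed

lemma prob_space_init_measure: "0 < \<omega> \<Longrightarrow> prob_space (init_measure m d \<omega>)"
  unfolding init_measure_def by (intro prob_space_PiM prob_space_normal_density)

lemma init_measure_component_measurable:
  assumes "p \<in> {..<m} \<times> {..<d}"
  shows "(\<lambda>W. W p) \<in> borel_measurable (init_measure m d \<omega>)"
proof -
  have "measurable (init_measure m d \<omega>) (density lborel (normal_density 0 \<omega>))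
      = measurable (init_measure m d \<omega>) borel"
    by (rule measurable_cong_sets) auto
  then show ?thesis
    using measurable_component_singleton[OF assms, of "\<lambda>_. density lborel (normal_density 0 \<omega>)"]
    unfolding init_measure_def by simp
qed

lemma frob_sq_measurable: "frob_sq m d \<in> borel_measurable (init_measure m d \<omega>)"
  unfolding frob_sq_def[abs_def]
  by (intro borel_measurable_sum borel_measurable_power init_measure_component_measurable)

text \<open>Markov's inequality for \<open>exp (frob_sq / (4\<omega>\<^sup>2))\<close>, whose expectation factorizes into a
  factor \<open>\<surd>2\<close> per entry.\<close>

lemma emeasure_frob_sq_gt_le:
  assumes "0 < \<omega>"
  shows "emeasure (init_measure m d \<omega>) {W \<in> space (init_measure m d \<omega>). T < frob_sq m d W}
     \<le> ennreal (sqrt 2 ^ (m * d) * exp (- T / (4 * \<omega>\<^sup>2)))"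
proof -
  define I where "I = {..<m} \<times> {..<d}"
  define N where "N = density lborel (normal_density 0 \<omega>)"
  define M where "M = init_measure m d \<omega>"
  define c where "c = 4 * \<omega>\<^sup>2"
  have M: "M = PiM I (\<lambda>_. N)"
    unfolding M_def init_measure_def N_def I_def ..
  interpret P: product_prob_space "\<lambda>_. N" I
    unfolding N_def using assms by (intro product_prob_spaceI prob_space_normal_density)
  have "finite I" "0 < c"
    unfolding I_def c_def using assms by auto
  have [measurable]: "frob_sq m d \<in> borel_measurable M"
    unfolding M_def by (rule frob_sq_measurable)
  have "emeasure M {W \<in> space M. T < frob_sq m d W} = (\<integral>\<^sup>+W. indicator {W \<in> space M. T < frob_sq m d W} W \<partial>M)"
    by (intro nn_integral_indicator[symmetric]) measurable
  also have "\<dots> \<le> (\<integral>\<^sup>+W. ennreal (exp (- T / c)) * (\<Prod>p\<in>I. ennreal (exp ((W p)\<^sup>2 / c))) \<partial>M)"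
  proof (intro nn_integral_mono)
    fix W
    have "exp ((frob_sq m d W - T) / c) = exp (- T / c) * (\<Prod>p\<in>I. exp ((W p)\<^sup>2 / c))"
      unfolding frob_sq_def I_def[symmetric] using \<open>finite I\<close>
      by (simp add: exp_sum[symmetric] exp_add[symmetric] sum_divide_distrib diff_divide_distrib)
    moreover have "indicator {W \<in> space M. T < frob_sq m d W} W \<le> ennreal (exp ((frob_sq m d W - T) / c))"
      using \<open>0 < c\<close> by (auto simp: indicator_def)
    ultimately show "indicator {W \<in> space M. T < frob_sq m d W} W
        \<le> ennreal (exp (- T / c)) * (\<Prod>p\<in>I. ennreal (exp ((W p)\<^sup>2 / c)))"
      by (simp add: ennreal_mult' prod_ennreal)
  qed
  also have "\<dots> = ennreal (exp (- T / c)) * (\<integral>\<^sup>+W. (\<Prod>p\<in>I. ennreal (exp ((W p)\<^sup>2 / c))) \<partial>M)"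
    unfolding M_def I_def
    by (subst nn_integral_cmult)
      (auto intro!: borel_measurable_prod_ennreal measurable_compose[OF init_measure_component_measurable])
  also have "(\<integral>\<^sup>+W. (\<Prod>p\<in>I. ennreal (exp ((W p)\<^sup>2 / c))) \<partial>M) = (\<Prod>p\<in>I. \<integral>\<^sup>+z. ennreal (exp (z\<^sup>2 / c)) \<partial>N)"
    unfolding M by (rule P.product_nn_integral_prod[OF \<open>finite I\<close>]) (simp add: N_def)
  also have "\<dots> = ennreal (sqrt 2 ^ (m * d))"
    unfolding N_def c_def I_def nn_integral_normal_exp_sq[OF assms]
    by (simp add: prod_ennreal card_cartesian_product ennreal_power)
  finally show ?thesis
    unfolding M_def c_def by (simp add: ennreal_mult'[symmetric] mult.commute)
qed

lemma measure_frob_sq_le_ge: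
  assumes "0 < \<omega>"
  shows "1 - sqrt 2 ^ (m * d) * exp (- T / (4 * \<omega>\<^sup>2))
    \<le> measure (init_measure m d \<omega>) {W \<in> space (init_measure m d \<omega>). frob_sq m d W \<le> T}"
proof -
  define M where "M = init_measure m d \<omega>"
  interpret P: prob_space M
    unfolding M_def using assms by (rule prob_space_init_measure)
  have [measurable]: "frob_sq m d \<in> borel_measurable M"
    unfolding M_def by (rule frob_sq_measurable)
  have "measure M {W \<in> space M. T < frob_sq m d W} \<le> sqrt 2 ^ (m * d) * exp (- T / (4 * \<omega>\<^sup>2))"
    using emeasure_frob_sq_gt_le[OF assms, of m d T] unfolding M_def[symmetric] P.emeasure_eq_measure
    by simp
  moreover have "{W \<in> space M. T < frob_sq m d W} \<in> sets M"
    by measurable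
  moreover have "{W \<in> space M. frob_sq m d W \<le> T} = space M - {W \<in> space M. T < frob_sq m d W}"
    by auto
  ultimately show ?thesis
    using P.prob_compl unfolding M_def by simp
qed

lemma gfun_borel_measurable: "gfun \<in> borel_measurable borel"
  unfolding gfun_def[abs_def] by measurable

lemma borel_measurable_net:
  assumes "\<And>p. p \<in> {..<m} \<times> {..<d} \<Longrightarrow> (\<lambda>W. V W p) \<in> borel_measurable M"
    and "\<phi> \<in> borel_measurable borel"
  shows "(\<lambda>W. net \<phi> a m d (V W) z) \<in> borel_measurable M"
  unfolding net_def
  by (intro borel_measurable_sum borel_measurable_times borel_measurable_const
      measurable_compose[OF _ assms(2)] assms(1)) auto

lemma borel_measurable_net_loss_grad_step:
  assumes V: "\<And>p. p \<in> {..<m} \<times> {..<d} \<Longrightarrow> (\<lambda>W. W p) \<in> borel_measurable M"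
    and \<phi>: "leaky_smooth \<phi> \<gamma> H"
  shows "(\<lambda>W. net \<phi> a m d (\<lambda>p. W p - \<alpha> * loss_grad \<phi> a m d n x y W p) z) \<in> borel_measurable M"
proof (rule borel_measurable_net[OF _ leaky_smooth_borel_measurable(1)[OF \<phi>]])
  fix p assume p: "p \<in> {..<m} \<times> {..<d}"
  obtain j k where jk: "p = (j, k)" by force
  have "(\<lambda>W. gfun (y i * net \<phi> a m d W (x i))) \<in> borel_measurable M" for i
    by (intro measurable_compose[OF _ gfun_borel_measurable] borel_measurable_times borel_measurable_const
        borel_measurable_net[OF V leaky_smooth_borel_measurable(1)[OF \<phi>]])
  moreover have "(\<lambda>W. deriv \<phi> (preact d W (x i) j)) \<in> borel_measurable M" for i
    unfolding preact_def using p jk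
    by (intro measurable_compose[OF _ leaky_smooth_borel_measurable(2)[OF \<phi>]]
        borel_measurable_sum borel_measurable_times borel_measurable_const V) auto
  ultimately show "(\<lambda>W. W p - \<alpha> * loss_grad \<phi> a m d n x y W p) \<in> borel_measurable M"
    using p jk V[OF p] unfolding loss_grad_def
    by (auto intro!: borel_measurable_diff borel_measurable_times borel_measurable_sum borel_measurable_const)
qed

lemma sqrt2_power_mult_exp_le:
  fixes K :: nat and L S \<delta> :: real
  assumes "1 \<le> K" "1 \<le> L" "exp (- L) \<le> \<delta>" "2 * (real K * L) \<le> S"
  shows "sqrt 2 ^ K * exp (- S) \<le> \<delta>"
proof -
  have "sqrt 2 \<le> 1 + 1 / 2"
    by (rule real_le_lsqrt) (auto simp: power2_eq_square)
  also have "\<dots> \<le> exp (1 / 2)"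
    by (rule exp_ge_add_one_self)
  finally have "sqrt 2 ^ K \<le> exp (1 / 2) ^ K"
    by (intro power_mono) auto
  then have "sqrt 2 ^ K * exp (- S) \<le> exp (real K / 2) * exp (- (2 * (real K * L)))"
    using assms(4) by (intro mult_mono) (auto simp: exp_of_nat_mult[symmetric])
  also have "\<dots> = exp (real K / 2 - 2 * (real K * L))"
    by (simp add: exp_add[symmetric])
  also have "\<dots> \<le> exp (- L)"
  proof -
    have "L \<le> real K * L" "real K \<le> real K * L"
      using assms(1,2) mult_right_mono[of 1 "real K" L] mult_left_mono[of 1 L "real K"] by auto
    then show ?thesis by simp
  qed
  finally show ?thesis
    using assms(3) by linarith
qed

lemma one_le_ln_four_mult_div:
  fixes m :: nat
  assumes "1 \<le> m" "0 < \<delta>" "\<delta> < 1"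
  shows "1 \<le> ln (4 * real m / \<delta>)" "exp (- ln (4 * real m / \<delta>)) \<le> \<delta>"
proof -
  have "exp 1 \<le> (3::real)"
    using exp_le by simp
  also have "\<dots> \<le> 4 * real m / \<delta>"
    using assms by (simp add: le_divide_eq)
  finally show "1 \<le> ln (4 * real m / \<delta>)"
    using assms by (simp add: ln_ge_iff)
  have "exp (- ln (4 * real m / \<delta>)) = \<delta> / (4 * real m)"
    using assms by (simp add: exp_minus)
  also have "\<dots> \<le> \<delta>"
    using assms by (simp add: divide_le_eq)
  finally show "exp (- ln (4 * real m / \<delta>)) \<le> \<delta>" .
qed

section \<open>One step of gradient descent\<close>

locale two_layer_net =
  fixes \<phi> :: "real \<Rightarrow> real" and \<gamma> H :: real and n m d :: nat
    and x :: "nat \<Rightarrow> nat \<Rightarrow> real" and y :: "nat \<Rightarrow> real" and a :: "nat \<Rightarrow> real"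
  assumes leaky: "leaky_smooth \<phi> \<gamma> H" and gamma_pos: "0 < \<gamma>"
    and n_pos: "1 \<le> n" and m_pos: "1 \<le> m"
    and labels: "\<forall>i<n. y i = 1 \<or> y i = -1"
    and outer_weights: "\<forall>j<m. a j = 1 / sqrt (real m) \<or> a j = - 1 / sqrt (real m)"
    and data_nonzero: "\<forall>i<n. vnorm d (x i) \<noteq> 0"
begin

abbreviation "f \<equiv> net \<phi> a m d"
abbreviation "R_max \<equiv> Rmax n d x"
abbreviation "R_min \<equiv> Rmin n d x"
abbreviation "weight W i \<equiv> gfun (y i * f W (x i))"

lemmas leaky_smooth = leaky_smoothD[OF leaky]

lemma abs_label: "i < n \<Longrightarrow> \<bar>y i\<bar> = 1"
  using labels by auto

lemma abs_outer_weight: "j < m \<Longrightarrow> \<bar>a j\<bar> = 1 / sqrt (real m)"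
  using outer_weights by auto

lemma outer_weight_sq: "j < m \<Longrightarrow> a j * a j = 1 / real m"
  using outer_weights m_pos by (auto simp: real_sqrt_mult[symmetric])

lemma dim_pos: "1 \<le> d"
  using data_nonzero n_pos by (cases d) (auto simp: vnorm_def ip_def)

lemma R_min_pos: "0 < R_min"
  and R_min_le: "i < n \<Longrightarrow> R_min \<le> vnorm d (x i)"
  and le_R_max: "i < n \<Longrightarrow> vnorm d (x i) \<le> R_max"
proof -
  have ne: "(\<lambda>i. vnorm d (x i)) ` {..<n} \<noteq> {}"
    using n_pos by (auto simp: lessThan_empty_iff)
  show "0 < R_min"
    unfolding Rmin_def using Min_in[OF _ ne] data_nonzero vnorm_nonneg by (force simp: order_le_less)
  show "i < n \<Longrightarrow> R_min \<le> vnorm d (x i)" "i < n \<Longrightarrow> vnorm d (x i) \<le> R_max"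
    unfolding Rmin_def Rmax_def by auto
qed

lemma R_min_le_R_max: "R_min \<le> R_max"
  using R_min_le[of 0] le_R_max[of 0] n_pos by linarith

lemma one_le_R_ratio_sq: "1 \<le> (R_max / R_min)\<^sup>2"
  using R_min_pos R_min_le_R_max by (simp add: le_divide_eq)

lemma emp_G_nonneg: "0 \<le> emp_G \<phi> a m d n x y W"
  and emp_G_le_one: "emp_G \<phi> a m d n x y W \<le> 1"
proof -
  have "0 \<le> (\<Sum>i<n. weight W i)"
    using gfun_pos by (auto intro: sum_nonneg less_imp_le)
  moreover have "(\<Sum>i<n. weight W i) \<le> (\<Sum>i<n. 1)"
    using gfun_less_one by (intro sum_mono less_imp_le)
  ultimately show "0 \<le> emp_G \<phi> a m d n x y W" "emp_G \<phi> a m d n x y W \<le> 1"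
    unfolding emp_G_def using n_pos by auto
qed

definition step :: "real \<Rightarrow> (nat \<times> nat \<Rightarrow> real) \<Rightarrow> nat \<times> nat \<Rightarrow> real" where
  "step \<alpha> W = (\<lambda>p. W p - \<alpha> * loss_grad \<phi> a m d n x y W p)"

definition preact_shift :: "real \<Rightarrow> (nat \<times> nat \<Rightarrow> real) \<Rightarrow> nat \<Rightarrow> nat \<Rightarrow> real" where
  "preact_shift \<alpha> W k j = \<alpha> / real n * a j
     * (\<Sum>i<n. weight W i * y i * deriv \<phi> (preact d W (x i) j) * ip d (x i) (x k))"

lemma gd_Suc_eq_step:
  "gd (emp_loss \<phi> a m d n x y) \<alpha> W0 (Suc t) = step \<alpha> (gd (emp_loss \<phi> a m d n x y) \<alpha> W0 t)"
  unfolding step_def by (rule gd_Suc_emp_loss[OF leaky_smooth(2)])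

lemma f_step_diff:
  "f (step \<alpha> W) (x k) - f W (x k)
     = (\<Sum>j<m. a j * (\<phi> (preact d W (x k) j + preact_shift \<alpha> W k j) - \<phi> (preact d W (x k) j)))"
  unfolding net_eq_sum_preact sum_subtractf[symmetric] right_diff_distrib[symmetric] step_def
  by (intro sum.cong refl) (simp add: preact_loss_grad_step preact_shift_def mult.assoc)

lemma first_order_term_eq:
  "(\<Sum>j<m. y k * a j * deriv \<phi> (preact d W (x k) j) * preact_shift \<alpha> W k j)
     = \<alpha> / (real n * real m) * (\<Sum>i<n. weight W i * y i * y k * ip d (x i) (x k)
         * (\<Sum>j<m. deriv \<phi> (preact d W (x i) j) * deriv \<phi> (preact d W (x k) j)))"
proof -
  have "y k * a j * deriv \<phi> (preact d W (x k) j) * preact_shift \<alpha> W k j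
      = \<alpha> / (real n * real m) * (\<Sum>i<n. weight W i * y i * y k * ip d (x i) (x k)
          * (deriv \<phi> (preact d W (x i) j) * deriv \<phi> (preact d W (x k) j)))"
    if "j < m" for j
  proof -
    have "y k * a j * deriv \<phi> (preact d W (x k) j) * preact_shift \<alpha> W k j
        = \<alpha> / real n * (a j * a j) * (\<Sum>i<n. weight W i * y i * y k * ip d (x i) (x k)
            * (deriv \<phi> (preact d W (x i) j) * deriv \<phi> (preact d W (x k) j)))"
      unfolding preact_shift_def by (simp add: sum_distrib_left algebra_simps)
    then show ?thesis
      using outer_weight_sq[OF that] by simp
  qed
  then show ?thesis
    by (simp add: sum_distrib_left sum.swap[of _ "{..<m}"])
qed

lemma first_order_term_ge:
  assumes "0 < \<alpha>" "0 < C" "k < n"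
    and weight_le: "\<And>i. i < n \<Longrightarrow> weight W i \<le> C * weight W k"
    and orth: "\<And>i. i < n \<Longrightarrow> i \<noteq> k \<Longrightarrow> 2 / \<gamma>\<^sup>2 * C * real n * \<bar>ip d (x i) (x k)\<bar> \<le> (vnorm d (x k))\<^sup>2"
  shows "\<alpha> * \<gamma>\<^sup>2 * weight W k * (vnorm d (x k))\<^sup>2 / (2 * real n)
    \<le> (\<Sum>j<m. y k * a j * deriv \<phi> (preact d W (x k) j) * preact_shift \<alpha> W k j)"
proof -
  define N where "N = (vnorm d (x k))\<^sup>2"
  define P where "P i = (\<Sum>j<m. deriv \<phi> (preact d W (x i) j) * deriv \<phi> (preact d W (x k) j))" for i
  define t where "t i = weight W i * y i * y k * ip d (x i) (x k) * P i" for i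
  define e where "e = real m * weight W k * \<gamma>\<^sup>2 * N / (2 * real n)"
  have w_k: "0 < weight W k" by (rule gfun_pos)
  have P_bounds: "0 \<le> P i" "P i \<le> real m" for i
  proof -
    have "0 \<le> deriv \<phi> u * deriv \<phi> v" "deriv \<phi> u * deriv \<phi> v \<le> 1" for u v
      using leaky_smooth(4,5)[of u] leaky_smooth(4,5)[of v] gamma_pos by (auto intro: mult_le_one)
    then have "0 \<le> P i" "P i \<le> (\<Sum>j<m. 1)"
      unfolding P_def by (intro sum_nonneg sum_mono; blast)+
    then show "0 \<le> P i" "P i \<le> real m" by auto
  qed
  have "real m * \<gamma>\<^sup>2 \<le> P k"
    unfolding P_def using leaky_smooth(4) gamma_pos
    by (intro order.trans[OF _ sum_bounded_below[of _ "\<gamma>\<^sup>2"]])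
      (auto simp: power2_eq_square intro: mult_mono order.trans[OF less_imp_le])
  moreover have "t k = weight W k * N * P k"
    unfolding t_def N_def ip_self_eq_vnorm_sq using abs_label[OF \<open>k < n\<close>]
    by (auto simp: abs_if split: if_splits)
  moreover have "0 \<le> weight W k * N"
    unfolding N_def using w_k by simp
  ultimately have "(weight W k * N) * (real m * \<gamma>\<^sup>2) \<le> t k"
    by (simp add: mult_left_mono)
  then have t_k: "real m * weight W k * \<gamma>\<^sup>2 * N \<le> t k"
    by (simp add: mult_ac)
  have "- e \<le> t i" if "i < n" "i \<noteq> k" for i
  proof -
    have "\<bar>t i\<bar> = weight W i * \<bar>ip d (x i) (x k)\<bar> * P i"
      unfolding t_def using abs_label[OF that(1)] abs_label[OF \<open>k < n\<close>]
        gfun_pos[of "y i * f W (x i)"] P_bounds(1)[of i]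
      by (simp add: abs_mult)
    also have "\<dots> \<le> (C * weight W k) * \<bar>ip d (x i) (x k)\<bar> * real m"
      using weight_le[OF that(1)] gfun_pos[THEN less_imp_le] P_bounds
        mult_nonneg_nonneg[OF mult_nonneg_nonneg[of C "weight W k"] abs_ge_zero] \<open>0 < C\<close> w_k
      by (intro mult_mono) auto
    also have "\<dots> = real m * weight W k * (C * \<bar>ip d (x i) (x k)\<bar>)"
      by simp
    also have "\<dots> \<le> real m * weight W k * (\<gamma>\<^sup>2 * N / (2 * real n))"
      using orth[OF that] gamma_pos n_pos w_k unfolding N_def
      by (intro mult_left_mono) (auto simp: field_simps)
    finally show ?thesis unfolding e_def by (simp add: abs_le_iff)
  qed
  moreover have "0 \<le> e"
    unfolding e_def N_def using w_k by simp
  ultimately have "t k - real n * e \<le> (\<Sum>i<n. t i)"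
    using sum_ge_dominant_term[OF \<open>k < n\<close>] by blast
  moreover have "real n * e = real m * weight W k * \<gamma>\<^sup>2 * N / 2"
    unfolding e_def using n_pos by simp
  ultimately have "real m * weight W k * \<gamma>\<^sup>2 * N / 2 \<le> (\<Sum>i<n. t i)"
    using t_k by linarith
  then have "\<alpha> / (real n * real m) * (real m * weight W k * \<gamma>\<^sup>2 * N / 2)
      \<le> \<alpha> / (real n * real m) * (\<Sum>i<n. t i)"
    using assms(1) by (intro mult_left_mono) auto
  then show ?thesis
    unfolding first_order_term_eq t_def P_def N_def using m_pos by (simp add: field_simps)
qed

lemma sum_sq_preact_shift_le:
  assumes "0 \<le> \<alpha>" "k < n"
  shows "(\<Sum>j<m. (preact_shift \<alpha> W k j)\<^sup>2)
    \<le> \<alpha>\<^sup>2 * (emp_G \<phi> a m d n x y W)\<^sup>2 * R_max\<^sup>2 * (vnorm d (x k))\<^sup>2"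
proof -
  define b where "b = R_max * vnorm d (x k)"
  define B where "B = \<alpha> / sqrt (real m) * (emp_G \<phi> a m d n x y W * b)"
  have "0 \<le> b"
    unfolding b_def using R_min_pos R_min_le_R_max vnorm_nonneg by simp
  have "\<bar>preact_shift \<alpha> W k j\<bar> \<le> B" if "j < m" for j
  proof -
    have "\<bar>weight W i * y i * deriv \<phi> (preact d W (x i) j) * ip d (x i) (x k)\<bar> \<le> weight W i * b"
      if "i < n" for i
    proof -
      have "\<bar>ip d (x i) (x k)\<bar> \<le> b"
        unfolding b_def using le_R_max[OF that] vnorm_nonneg
        by (intro order.trans[OF abs_ip_le_vnorm_mult] mult_right_mono)
      moreover have "\<bar>deriv \<phi> (preact d W (x i) j)\<bar> \<le> 1"
        using leaky_smooth(4,5)[of "preact d W (x i) j"] gamma_pos by simp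
      ultimately have "\<bar>deriv \<phi> (preact d W (x i) j)\<bar> * \<bar>ip d (x i) (x k)\<bar> \<le> 1 * b"
        by (intro mult_mono) auto
      then show ?thesis
        using abs_label[OF that] gfun_pos[of "y i * f W (x i)"]
        by (simp add: abs_mult mult.assoc mult_left_mono)
    qed
    then have "(\<Sum>i<n. \<bar>weight W i * y i * deriv \<phi> (preact d W (x i) j) * ip d (x i) (x k)\<bar>)
        \<le> (\<Sum>i<n. weight W i * b)"
      by (intro sum_mono) simp
    then have sum_le: "\<bar>\<Sum>i<n. weight W i * y i * deriv \<phi> (preact d W (x i) j) * ip d (x i) (x k)\<bar>
        \<le> real n * (emp_G \<phi> a m d n x y W * b)"
      unfolding emp_G_def using n_pos order.trans[OF sum_abs] by (simp add: sum_distrib_right)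
    have "\<bar>preact_shift \<alpha> W k j\<bar> = \<alpha> / (real n * sqrt (real m))
        * \<bar>\<Sum>i<n. weight W i * y i * deriv \<phi> (preact d W (x i) j) * ip d (x i) (x k)\<bar>"
      unfolding preact_shift_def abs_mult abs_outer_weight[OF that] using assms(1) by simp
    also have "\<dots> \<le> \<alpha> / (real n * sqrt (real m)) * (real n * (emp_G \<phi> a m d n x y W * b))"
      using sum_le assms(1) by (intro mult_left_mono) auto
    also have "\<dots> = B"
      unfolding B_def using n_pos by simp
    finally show ?thesis .
  qed
  then have "(\<Sum>j<m. (preact_shift \<alpha> W k j)\<^sup>2) \<le> (\<Sum>j<m. B\<^sup>2)"
    by (intro sum_mono) (metis abs_ge_zero abs_le_square_iff abs_of_nonneg order.trans lessThan_iff)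
  also have "\<dots> = \<alpha>\<^sup>2 * (emp_G \<phi> a m d n x y W)\<^sup>2 * R_max\<^sup>2 * (vnorm d (x k))\<^sup>2"
    unfolding B_def b_def using m_pos by (simp add: power_mult_distrib power_divide)
  finally show ?thesis .
qed

lemma margin_increment_ge:
  assumes "0 < \<alpha>" "0 < C" "k < n"
    and ratio: "\<forall>i<n. \<forall>j<n. weight W i / weight W j \<le> C"
    and orth: "\<forall>k<n. \<forall>i<n. i \<noteq> k \<longrightarrow> (vnorm d (x k))\<^sup>2 \<ge> 2 / \<gamma>\<^sup>2 * C * real n * \<bar>ip d (x i) (x k)\<bar>"
    and step_size: "\<alpha> * (2 * H * C * (R_max / R_min)\<^sup>2 * R_max\<^sup>2 * real n) \<le> \<gamma>\<^sup>2"
  shows "\<alpha> * \<gamma>\<^sup>2 * R_min\<^sup>2 / (4 * C * real n) * emp_G \<phi> a m d n x y W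
    \<le> y k * (f (step \<alpha> W) (x k) - f W (x k))"
proof -
  define G where "G = emp_G \<phi> a m d n x y W"
  define N where "N = (vnorm d (x k))\<^sup>2"
  define lin where "lin = (\<Sum>j<m. y k * a j * deriv \<phi> (preact d W (x k) j) * preact_shift \<alpha> W k j)"
  have weight_le: "weight W i \<le> C * weight W k" if "i < n" for i
    using ratio that \<open>k < n\<close> gfun_pos[of "y k * f W (x k)"] by (simp add: divide_le_eq)
  have "G \<le> C * weight W k"
    unfolding G_def emp_G_def using sum_mono[of "{..<n}", OF weight_le] n_pos by (simp add: field_simps)
  then have "G / C \<le> weight W k"
    using \<open>0 < C\<close> by (simp add: divide_le_eq mult.commute)
  then have "\<alpha> * \<gamma>\<^sup>2 * N / (2 * real n) * (G / C) \<le> \<alpha> * \<gamma>\<^sup>2 * N / (2 * real n) * weight W k"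
    using \<open>0 < \<alpha>\<close> by (intro mult_left_mono) (auto simp: N_def)
  also have "\<dots> = \<alpha> * \<gamma>\<^sup>2 * weight W k * N / (2 * real n)"
    by simp
  also have "\<dots> \<le> lin"
    unfolding lin_def N_def using first_order_term_ge assms(1-3) weight_le orth by simp
  finally have lin_ge: "\<alpha> * \<gamma>\<^sup>2 * N / (2 * real n) * (G / C) \<le> lin" .
  have "\<alpha> * H * R_max\<^sup>2 * (2 * C * real n) * 1 \<le> \<alpha> * H * R_max\<^sup>2 * (2 * C * real n) * (R_max / R_min)\<^sup>2"
    using one_le_R_ratio_sq assms(1,2) leaky_smooth(7) by (intro mult_left_mono) auto
  also have "\<dots> = \<alpha> * (2 * H * C * (R_max / R_min)\<^sup>2 * R_max\<^sup>2 * real n)"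
    by (simp add: mult_ac)
  also have "\<dots> \<le> \<gamma>\<^sup>2"
    by (rule step_size)
  finally have "\<alpha> * H * R_max\<^sup>2 \<le> \<gamma>\<^sup>2 / (2 * C * real n)"
    using \<open>0 < C\<close> n_pos by (simp add: le_divide_eq)
  moreover have "\<alpha> * G\<^sup>2 * N / 2 \<le> \<alpha> * G * N / 2"
    unfolding G_def N_def using emp_G_nonneg emp_G_le_one \<open>0 < \<alpha>\<close>
    by (intro divide_right_mono mult_right_mono mult_left_mono) (auto simp: power2_eq_square mult_left_le_one_le)
  moreover have "0 \<le> \<alpha> * G\<^sup>2 * N / 2" "0 \<le> \<gamma>\<^sup>2 / (2 * C * real n)"
    using \<open>0 < \<alpha>\<close> \<open>0 < C\<close> by (auto simp: N_def)
  ultimately have "(\<alpha> * H * R_max\<^sup>2) * (\<alpha> * G\<^sup>2 * N / 2) \<le> \<gamma>\<^sup>2 / (2 * C * real n) * (\<alpha> * G * N / 2)"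
    by (intro mult_mono) auto
  moreover have "H / 2 * (\<alpha>\<^sup>2 * G\<^sup>2 * R_max\<^sup>2 * N) = (\<alpha> * H * R_max\<^sup>2) * (\<alpha> * G\<^sup>2 * N / 2)"
    by (simp add: power2_eq_square mult_ac)
  ultimately have "H / 2 * (\<alpha>\<^sup>2 * G\<^sup>2 * R_max\<^sup>2 * N) \<le> \<gamma>\<^sup>2 / (2 * C * real n) * (\<alpha> * G * N / 2)"
    by (simp only:)
  moreover have "H / 2 * (\<Sum>j<m. (preact_shift \<alpha> W k j)\<^sup>2) \<le> H / 2 * (\<alpha>\<^sup>2 * G\<^sup>2 * R_max\<^sup>2 * N)"
    unfolding G_def N_def using sum_sq_preact_shift_le assms(1,3) leaky_smooth(7)
    by (intro mult_left_mono) auto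
  moreover have "lin - H / 2 * (\<Sum>j<m. (preact_shift \<alpha> W k j)\<^sup>2) \<le> y k * (f (step \<alpha> W) (x k) - f W (x k))"
    unfolding lin_def f_step_diff using abs_label[OF \<open>k < n\<close>] abs_outer_weight m_pos
    by (intro sum_increment_ge_linearization[OF leaky]) auto
  moreover have "\<alpha> * \<gamma>\<^sup>2 * R_min\<^sup>2 / (4 * C * real n) * G \<le> \<alpha> * \<gamma>\<^sup>2 * N / (4 * C * real n) * G"
    unfolding G_def N_def using emp_G_nonneg assms(1,2) R_min_le[OF \<open>k < n\<close>] R_min_pos
    by (intro mult_right_mono divide_right_mono mult_left_mono power_mono) auto
  moreover have "\<alpha> * \<gamma>\<^sup>2 * N / (2 * real n) * (G / C) - \<gamma>\<^sup>2 / (2 * C * real n) * (\<alpha> * G * N / 2)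
      = \<alpha> * \<gamma>\<^sup>2 * N / (4 * C * real n) * G"
    using \<open>0 < C\<close> n_pos by (simp add: field_simps)
  ultimately show ?thesis
    using lin_ge unfolding G_def by linarith
qed

section \<open>Small initialization\<close>

abbreviation "C_R \<equiv> 10 * (R_max / R_min)\<^sup>2 / \<gamma>\<^sup>2 + 10"

text \<open>With \<open>C' = 4\<close> and \<open>G \<ge> 1/4\<close>, the margin gained in the first step is at least \<open>output_radius \<alpha>\<close>.\<close>

definition output_radius :: "real \<Rightarrow> real" where
  "output_radius \<alpha> = \<alpha> * \<gamma>\<^sup>2 * R_min\<^sup>2 / (64 * real n)"

lemma C_R_ge_10: "10 \<le> C_R"
  using gamma_pos by simp

lemma output_radius_pos: "0 < \<alpha> \<Longrightarrow> 0 < output_radius \<alpha>"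
  unfolding output_radius_def using gamma_pos R_min_pos n_pos by simp

context
  fixes \<alpha> :: real
  assumes alpha_pos: "0 < \<alpha>"
    and small_step: "\<alpha> \<le> \<gamma>\<^sup>2 / (5 * real n * R_max\<^sup>2 * (R_max / R_min)\<^sup>2 * C_R * max 1 H)"
begin

lemma small_step_mult: "\<alpha> * (5 * real n * R_max\<^sup>2 * (R_max / R_min)\<^sup>2 * C_R * max 1 H) \<le> \<gamma>\<^sup>2"
proof -
  have "0 < C_R"
    using C_R_ge_10 by linarith
  then have "0 < 5 * real n * R_max\<^sup>2 * (R_max / R_min)\<^sup>2 * C_R * max 1 H"
    using n_pos R_min_pos R_min_le_R_max by (intro mult_pos_pos) auto
  then show ?thesis
    using small_step by (simp add: le_divide_eq)
qed

lemma step_size_four: "\<alpha> * (2 * H * 4 * (R_max / R_min)\<^sup>2 * R_max\<^sup>2 * real n) \<le> \<gamma>\<^sup>2"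
proof -
  \<comment> \<open>an opaque name for \<open>C_R\<close> keeps the simplifier from distributing over its expansion\<close>
  obtain c where c: "c = C_R" by simp
  define Q where "Q = (R_max / R_min)\<^sup>2 * R_max\<^sup>2 * real n"
  have "10 * (5 * max 1 H) \<le> c * (5 * max 1 H)"
    using C_R_ge_10 unfolding c by (intro mult_right_mono) auto
  then have "8 * H \<le> 5 * c * max 1 H"
    using max.cobounded2[of 1 H] leaky_smooth(7) by linarith
  then have "\<alpha> * (8 * H * Q) \<le> \<alpha> * (5 * c * max 1 H * Q)"
    unfolding Q_def using alpha_pos by (intro mult_left_mono mult_right_mono) auto
  also have "\<dots> \<le> \<gamma>\<^sup>2"
    using small_step_mult unfolding c[symmetric] Q_def by (simp add: mult_ac)
  finally show ?thesis
    unfolding Q_def by (simp add: mult_ac)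
qed

lemma output_radius_le_one: "output_radius \<alpha> \<le> 1"
proof -
  have "50 * R_max\<^sup>2 = 5 * 1 * R_max\<^sup>2 * 1 * 10 * 1"
    by simp
  also have "\<dots> \<le> 5 * real n * R_max\<^sup>2 * (R_max / R_min)\<^sup>2 * C_R * max 1 H"
    using n_pos one_le_R_ratio_sq C_R_ge_10 by (intro mult_mono) auto
  finally have "\<alpha> * (50 * R_max\<^sup>2) \<le> \<gamma>\<^sup>2"
    using small_step_mult alpha_pos by (meson mult_left_mono less_imp_le order.trans)
  also have "\<gamma>\<^sup>2 \<le> 1"
    using leaky_smooth(8) gamma_pos by (simp add: power_le_one)
  finally have "\<alpha> * R_max\<^sup>2 \<le> 1 / 50" by simp
  moreover have "\<alpha> * \<gamma>\<^sup>2 * R_min\<^sup>2 \<le> \<alpha> * 1 * R_max\<^sup>2"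
    using alpha_pos gamma_pos leaky_smooth(8) R_min_pos R_min_le_R_max
    by (intro mult_mono power_mono) (auto simp: power_le_one)
  ultimately show ?thesis
    unfolding output_radius_def using n_pos by (simp add: divide_le_eq)
qed

lemma positive_margin_after_step:
  assumes orth: "\<forall>k<n. \<forall>i<n. i \<noteq> k \<longrightarrow> (vnorm d (x k))\<^sup>2 \<ge> 8 / \<gamma>\<^sup>2 * real n * \<bar>ip d (x i) (x k)\<bar>"
    and small: "\<forall>i<n. \<bar>f W (x i)\<bar> < output_radius \<alpha>" and "k < n"
  shows "0 < y k * f (step \<alpha> W) (x k)"
proof -
  have margin_small: "\<bar>y i * f W (x i)\<bar> < output_radius \<alpha>" if "i < n" for i
    using small that abs_label[OF that] by (simp add: abs_mult)
  have weight_ge: "1 / 4 \<le> weight W i" if "i < n" for i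
    using margin_small[OF that] output_radius_le_one by (intro gfun_ge_quarter) (simp add: abs_less_iff)
  have "\<forall>i<n. \<forall>j<n. weight W i / weight W j \<le> 4"
  proof (intro allI impI)
    fix i j assume "i < n" "j < n"
    then show "weight W i / weight W j \<le> 4"
      using weight_ge[of j] gfun_less_one[of "y i * f W (x i)"] by (simp add: divide_le_eq)
  qed
  from margin_increment_ge[OF alpha_pos _ \<open>k < n\<close> this _ step_size_four] orth
  have "\<alpha> * \<gamma>\<^sup>2 * R_min\<^sup>2 / (16 * real n) * emp_G \<phi> a m d n x y W
      \<le> y k * (f (step \<alpha> W) (x k) - f W (x k))"
    by simp
  moreover have "1 / 4 \<le> emp_G \<phi> a m d n x y W"
    unfolding emp_G_def using sum_mono[of "{..<n}" "\<lambda>_. 1 / 4", OF weight_ge] n_pos by simp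
  then have "\<alpha> * \<gamma>\<^sup>2 * R_min\<^sup>2 / (16 * real n) * (1 / 4)
      \<le> \<alpha> * \<gamma>\<^sup>2 * R_min\<^sup>2 / (16 * real n) * emp_G \<phi> a m d n x y W"
    using alpha_pos by (intro mult_left_mono) auto
  then have "output_radius \<alpha> \<le> \<alpha> * \<gamma>\<^sup>2 * R_min\<^sup>2 / (16 * real n) * emp_G \<phi> a m d n x y W"
    unfolding output_radius_def by simp
  ultimately show ?thesis
    using margin_small[OF \<open>k < n\<close>] by (simp add: right_diff_distrib abs_less_iff)
qed

lemma exp_loss_ratio_le:
  assumes "\<forall>i<n. \<bar>f W (x i)\<bar> < output_radius \<alpha>"
  shows "\<forall>i<n. \<forall>j<n. exp (- (y i * f W (x i))) / exp (- (y j * f W (x j))) \<le> exp 2"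
proof (intro allI impI)
  fix i j assume "i < n" "j < n"
  then have "\<bar>y i * f W (x i)\<bar> \<le> 1" "\<bar>y j * f W (x j)\<bar> \<le> 1"
    using assms abs_label output_radius_le_one by (auto simp: abs_mult)
  then have "y j * f W (x j) - y i * f W (x i) \<le> 2"
    by (auto simp: abs_le_iff)
  then show "exp (- (y i * f W (x i))) / exp (- (y j * f W (x j))) \<le> exp 2"
    by (simp add: exp_diff[symmetric])
qed

end

lemma chernoff_tail_le:
  assumes "0 < \<alpha>" "0 < \<omega>" "0 < \<delta>" "\<delta> < 1"
    and small_init: "\<omega> \<le> \<alpha> * \<gamma>\<^sup>2 * R_min / (72 * (R_max / R_min) * C_R * real n
                        * sqrt (real m * real d * ln (4 * real m / \<delta>)))"
  shows "sqrt 2 ^ (m * d) * exp (- ((output_radius \<alpha>)\<^sup>2 / (2 * R_max\<^sup>2)) / (4 * \<omega>\<^sup>2)) \<le> \<delta>"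
proof -
  obtain c where c: "c = C_R" by simp
  define K where "K = real m * real d"
  define L where "L = ln (4 * real m / \<delta>)"
  define Y where "Y = \<alpha> * \<gamma>\<^sup>2 * R_min\<^sup>2 / (72 * R_max * c * real n)"
  have L: "1 \<le> L" "exp (- L) \<le> \<delta>"
    unfolding L_def using one_le_ln_four_mult_div m_pos assms(3,4) by auto
  have "1 \<le> K"
    unfolding K_def using m_pos dim_pos mult_mono[of 1 "real m" 1 "real d"] by simp
  have "10 \<le> c"
    unfolding c by (rule C_R_ge_10)
  have "0 < sqrt (K * L)"
    using \<open>1 \<le> K\<close> L by simp
  moreover have "\<omega> \<le> Y / sqrt (K * L)"
    using small_init R_min_pos \<open>10 \<le> c\<close> n_pos
    unfolding c[symmetric] K_def[symmetric] L_def[symmetric] Y_def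
    by (simp add: field_simps power2_eq_square)
  ultimately have "(\<omega> * sqrt (K * L))\<^sup>2 \<le> Y\<^sup>2"
    using assms(2) by (intro power_mono) (auto simp: le_divide_eq)
  then have "\<omega>\<^sup>2 * (K * L) \<le> Y\<^sup>2"
    using \<open>1 \<le> K\<close> L by (simp add: power_mult_distrib)
  then have "8 * (\<omega>\<^sup>2 * (K * L)) \<le> Y\<^sup>2 * 8"
    by simp
  also have "\<dots> \<le> Y\<^sup>2 * ((72 * c)\<^sup>2 / 8192)"
    using mult_mono[OF \<open>10 \<le> c\<close> \<open>10 \<le> c\<close>] \<open>10 \<le> c\<close>
    by (intro mult_left_mono) (auto simp: power2_eq_square)
  also have "\<dots> = (Y * (72 * c * R_max / 64))\<^sup>2 / (2 * R_max\<^sup>2)"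
    using R_min_pos R_min_le_R_max by (simp add: field_simps)
  also have "Y * (72 * c * R_max / 64) = output_radius \<alpha>"
    unfolding output_radius_def Y_def using R_min_pos R_min_le_R_max \<open>10 \<le> c\<close> n_pos
    by (simp add: field_simps)
  finally have "8 * (\<omega>\<^sup>2 * (K * L)) \<le> (output_radius \<alpha>)\<^sup>2 / (2 * R_max\<^sup>2)" .
  moreover have "2 * (real (m * d) * L) * (4 * \<omega>\<^sup>2) = 8 * (\<omega>\<^sup>2 * (K * L))"
    unfolding K_def by simp
  ultimately have "2 * (real (m * d) * L) * (4 * \<omega>\<^sup>2) \<le> (output_radius \<alpha>)\<^sup>2 / (2 * R_max\<^sup>2)"
    by (simp only:)
  then have "2 * (real (m * d) * L) \<le> (output_radius \<alpha>)\<^sup>2 / (2 * R_max\<^sup>2) / (4 * \<omega>\<^sup>2)"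
    by (rule pos_le_divide_eq[THEN iffD2, rotated]) (use assms(2) in simp)
  moreover have "1 \<le> m * d"
    using m_pos dim_pos by (simp add: Suc_le_eq)
  ultimately show ?thesis
    using sqrt2_power_mult_exp_le[of "m * d" L] L by simp
qed

lemma f_measurable [measurable]: "(\<lambda>W. f W z) \<in> borel_measurable (init_measure m d \<omega>)"
  by (intro borel_measurable_net init_measure_component_measurable leaky_smooth_borel_measurable(1)[OF leaky])

lemma f_step_measurable [measurable]: "(\<lambda>W. f (step \<alpha> W) z) \<in> borel_measurable (init_measure m d \<omega>)"
  unfolding step_def
  by (rule borel_measurable_net_loss_grad_step[OF init_measure_component_measurable leaky])

lemma prob_ge_of_small_outputs:
  assumes "0 < \<alpha>" "0 < \<omega>" "0 < \<delta>" "\<delta> < 1"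
    and small_init: "\<omega> \<le> \<alpha> * \<gamma>\<^sup>2 * R_min / (72 * (R_max / R_min) * C_R * real n
                        * sqrt (real m * real d * ln (4 * real m / \<delta>)))"
    and "{W \<in> space (init_measure m d \<omega>). P W} \<in> sets (init_measure m d \<omega>)"
    and P: "\<And>W. \<forall>i<n. \<bar>f W (x i)\<bar> < output_radius \<alpha> \<Longrightarrow> P W"
  shows "1 - \<delta> \<le> measure (init_measure m d \<omega>) {W \<in> space (init_measure m d \<omega>). P W}"
proof -
  define M where "M = init_measure m d \<omega>"
  define B where "B = output_radius \<alpha>"
  define T where "T = B\<^sup>2 / (2 * R_max\<^sup>2)"
  interpret prob_space M
    unfolding M_def using assms(2) by (rule prob_space_init_measure)
  have "P W" if "frob_sq m d W \<le> T" for W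
  proof (intro P allI impI)
    fix i assume "i < n"
    have "(f W (x i))\<^sup>2 \<le> (vnorm d (x i))\<^sup>2 * frob_sq m d W"
      using leaky gamma_pos abs_outer_weight by (intro net_sq_le_vnorm_frob_sq) auto
    also have "\<dots> \<le> R_max\<^sup>2 * T"
      using le_R_max[OF \<open>i < n\<close>] vnorm_nonneg that frob_sq_nonneg by (intro mult_mono power_mono) auto
    also have "\<dots> < B\<^sup>2"
      unfolding T_def B_def using output_radius_pos[OF assms(1)] R_min_pos R_min_le_R_max by simp
    finally show "\<bar>f W (x i)\<bar> < output_radius \<alpha>"
      unfolding B_def using output_radius_pos[OF assms(1)] by (simp add: power2_less_imp_less)
  qed
  then have "{W \<in> space M. frob_sq m d W \<le> T} \<subseteq> {W \<in> space M. P W}"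
    by auto
  then have "measure M {W \<in> space M. frob_sq m d W \<le> T} \<le> measure M {W \<in> space M. P W}"
    using assms(6) unfolding M_def[symmetric] by (rule finite_measure_mono)
  moreover have "1 - \<delta> \<le> measure M {W \<in> space M. frob_sq m d W \<le> T}"
    using measure_frob_sq_le_ge[OF assms(2), of m d T] chernoff_tail_le[OF assms(1-5)]
    unfolding M_def T_def B_def by simp
  ultimately show ?thesis
    unfolding M_def by simp
qed

lemma prob_loss_ratio_le_exp2:
  assumes "0 < \<alpha>" "0 < \<omega>" "0 < \<delta>" "\<delta> < 1"
    and small_step: "\<alpha> \<le> \<gamma>\<^sup>2 / (5 * real n * R_max\<^sup>2 * (R_max / R_min)\<^sup>2 * C_R * max 1 H)"
    and small_init: "\<omega> \<le> \<alpha> * \<gamma>\<^sup>2 * R_min / (72 * (R_max / R_min) * C_R * real n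
                        * sqrt (real m * real d * ln (4 * real m / \<delta>)))"
  shows "1 - \<delta> \<le> measure (init_measure m d \<omega>) {W \<in> space (init_measure m d \<omega>).
    \<forall>i<n. \<forall>j<n. exp (- (y i * f W (x i))) / exp (- (y j * f W (x j))) \<le> exp 2}"
  using exp_loss_ratio_le[OF assms(1) small_step]
  by (intro prob_ge_of_small_outputs[OF assms(1-4) small_init]) measurable

lemma prob_positive_margin_after_step:
  assumes "0 < \<alpha>" "0 < \<omega>" "0 < \<delta>" "\<delta> < 1"
    and orth: "\<forall>k<n. \<forall>i<n. i \<noteq> k \<longrightarrow> (vnorm d (x k))\<^sup>2 \<ge> 8 / \<gamma>\<^sup>2 * real n * \<bar>ip d (x i) (x k)\<bar>"
    and small_step: "\<alpha> \<le> \<gamma>\<^sup>2 / (5 * real n * R_max\<^sup>2 * (R_max / R_min)\<^sup>2 * C_R * max 1 H)"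
    and small_init: "\<omega> \<le> \<alpha> * \<gamma>\<^sup>2 * R_min / (72 * (R_max / R_min) * C_R * real n
                        * sqrt (real m * real d * ln (4 * real m / \<delta>)))"
  shows "1 - \<delta> \<le> measure (init_measure m d \<omega>)
    {W \<in> space (init_measure m d \<omega>). \<forall>k<n. 0 < y k * f (step \<alpha> W) (x k)}"
  using positive_margin_after_step[OF assms(1) small_step orth]
  by (intro prob_ge_of_small_outputs[OF assms(1-4) small_init]) (measurable, auto)

end

theorem mainTheorem11:
  fixes \<phi> :: "real \<Rightarrow> real" and \<gamma> H :: real
    and n m d :: nat and x :: "nat \<Rightarrow> nat \<Rightarrow> real" and y :: "nat \<Rightarrow> real"
    and a :: "nat \<Rightarrow> real" and \<alpha> \<omega> \<delta> :: real
  defines "f \<equiv> net \<phi> a m d"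
    and "L \<equiv> emp_loss \<phi> a m d n x y"
    and "G \<equiv> emp_G \<phi> a m d n x y"
    and "Rmx \<equiv> Rmax n d x" and "Rmn \<equiv> Rmin n d x"
    and "R \<equiv> Rmax n d x / Rmin n d x"
    and "CR \<equiv> 10 * (Rmax n d x / Rmin n d x)\<^sup>2 / \<gamma>\<^sup>2 + 10"
    and "M \<equiv> init_measure m d \<omega>"
  assumes phi: "leaky_smooth \<phi> \<gamma> H" and gam: "0 < \<gamma>"
    and n: "1 \<le> n" and m: "1 \<le> m" and d: "1 \<le> d"
    and y: "\<forall>i<n. y i = 1 \<or> y i = -1"
    and a: "\<forall>j<m. a j = 1 / sqrt (real m) \<or> a j = - 1 / sqrt (real m)"
    and xnz: "\<forall>i<n. vnorm d (x i) \<noteq> 0"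
    and alpha: "0 < \<alpha>" and omega: "0 < \<omega>"
    and delta: "0 < \<delta>" "\<delta> < 1"
  shows
   "(\<alpha> \<le> \<gamma>\<^sup>2 / (5 * real n * Rmx\<^sup>2 * R\<^sup>2 * CR * max 1 H)
      \<and> \<omega> \<le> \<alpha> * \<gamma>\<^sup>2 * Rmn / (72 * R * CR * real n * sqrt (real m * real d * ln (4 * real m / \<delta>)))
      \<longrightarrow> measure M {W \<in> space M. \<forall>i<n. \<forall>j<n.
              exp (- (y i * f W (x i))) / exp (- (y j * f W (x j))) \<le> exp 2} \<ge> 1 - \<delta>)
  \<and> (\<forall>W0 t C'. C' > 1
      \<and> (\<forall>i<n. \<forall>j<n. gfun (y i * f (gd L \<alpha> W0 t) (x i)) / gfun (y j * f (gd L \<alpha> W0 t) (x j)) \<le> C')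
      \<and> (\<forall>k<n. \<forall>i<n. i \<noteq> k \<longrightarrow>
            (vnorm d (x k))\<^sup>2 \<ge> 2 / \<gamma>\<^sup>2 * C' * real n * \<bar>ip d (x i) (x k)\<bar>)
      \<and> \<alpha> * (2 * H * C' * R\<^sup>2 * Rmx\<^sup>2 * real n) \<le> \<gamma>\<^sup>2
      \<longrightarrow> (\<forall>k<n. y k * (f (gd L \<alpha> W0 (Suc t)) (x k) - f (gd L \<alpha> W0 t) (x k))
              \<ge> \<alpha> * \<gamma>\<^sup>2 * Rmn\<^sup>2 / (4 * C' * real n) * G (gd L \<alpha> W0 t)))
  \<and> ((\<forall>k<n. \<forall>i<n. i \<noteq> k \<longrightarrow>
            (vnorm d (x k))\<^sup>2 \<ge> 8 / \<gamma>\<^sup>2 * real n * \<bar>ip d (x i) (x k)\<bar>)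
      \<and> \<alpha> \<le> \<gamma>\<^sup>2 / (5 * real n * Rmx\<^sup>2 * R\<^sup>2 * CR * max 1 H)
      \<and> \<omega> \<le> \<alpha> * \<gamma>\<^sup>2 * Rmn / (72 * R * CR * real n * sqrt (real m * real d * ln (4 * real m / \<delta>)))
      \<longrightarrow> measure M {W \<in> space M. \<forall>k<n. y k * f (gd L \<alpha> W 1) (x k) > 0} \<ge> 1 - \<delta>)"
proof -
  interpret two_layer_net \<phi> \<gamma> H n m d x y a
    using phi gam n m y a xnz by unfold_locales
  have gd_one: "gd (emp_loss \<phi> a m d n x y) \<alpha> W 1 = step \<alpha> W" for W
    using gd_Suc_eq_step[of \<alpha> W 0] by simp
  show ?thesis
    unfolding f_def L_def G_def Rmx_def Rmn_def R_def CR_def M_def gd_one gd_Suc_eq_step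
    by (intro conjI impI allI; elim conjE)
      (rule prob_loss_ratio_le_exp2[OF alpha omega delta] margin_increment_ge[OF alpha]
        prob_positive_margin_after_step[OF alpha omega delta]; (assumption | linarith))+
qed

end
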